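(* Let $g(x)$ and $a(x)$ be coprime real univariate polynomials with $\deg(g)=m$. If $a(x)>0$ for all $x\in\{x\in\mathbb{R}\mid g(x)=0\}$, then there exists a polynomial $t\in\mathbb{R}[x]_m$ such that $a\equiv t^2\pmod g$.
   Context: $\mathbb{R}[x]_m$ is the space of real univariate polynomials of degree at most $m$. For univariate polynomials, $a\equiv b\pmod g$ means $a=b+wg$ for some $w\in\mathbb{R}[x]$. Coprime means the greatest common divisor is a constant. *)

theory Defs
  imports "HOL-Computational_Algebra.Computational_Algebra"
begin

end

(* Every prime factor q of g has a complex root z, and a real polynomial of degree at most one
   takes any prescribed value at a non-real z; so a is a square modulo q (at a real root, a(z) > 0
   has a real square root). As 2a is invertible modulo q, Newton's iteration lifts the square root
   to every power of q, the Chinese remainder theorem combines the prime-power factors of g, and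
   reducing the square root modulo g bounds its degree. *)

theory Submission
  imports Defs "HOL-Computational_Algebra.Field_as_Ring"
begin

definition is_square_mod :: "'a::comm_ring_1 \<Rightarrow> 'a \<Rightarrow> bool" where
  "is_square_mod g a \<longleftrightarrow> (\<exists>t. g dvd a - t ^ 2)"

lemma is_square_mod_unit: "is_unit g \<Longrightarrow> is_square_mod g a"
  unfolding is_square_mod_def by blast

lemma is_square_mod_dvd: "h dvd g \<Longrightarrow> is_square_mod g a \<Longrightarrow> is_square_mod h a"
  unfolding is_square_mod_def by (blast intro: dvd_trans)

lemma coprime_bezout:
  fixes a b :: "'a::euclidean_ring_gcd"
  assumes "coprime a b"
  obtains u v where "u * a + v * b = 1"
  using bezout_coefficients_fst_snd [of a b] assms by (metis coprime_iff_gcd_eq_1)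

lemma is_square_mod_mult:
  fixes A B :: "'a::euclidean_ring_gcd"
  assumes "coprime A B" "is_square_mod A a" "is_square_mod B a"
  shows "is_square_mod (A * B) a"
proof -
  obtain s t where s: "A dvd a - s ^ 2" and t: "B dvd a - t ^ 2"
    using assms(2,3) unfolding is_square_mod_def by blast
  obtain u v where uv: "u * A + v * B = 1"
    using assms(1) by (rule coprime_bezout)
  define r where "r = s * v * B + t * u * A"
  have "r - s = r - s * (u * A + v * B)" and "r - t = r - t * (u * A + v * B)"
    by (simp_all add: uv)
  then have rs: "r - s = A * (u * (t - s))" and rt: "r - t = B * (v * (s - t))"
    unfolding r_def by (simp_all add: algebra_simps)
  have "a - r ^ 2 = (a - s ^ 2) - (r - s) * (r + s)" and "a - r ^ 2 = (a - t ^ 2) - (r - t) * (r + t)"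
    by (simp_all add: algebra_simps power2_eq_square)
  then have "A dvd a - r ^ 2" and "B dvd a - r ^ 2"
    using s t rs rt by (metis dvd_diff dvd_mult2 dvd_triv_left)+
  then show ?thesis
    unfolding is_square_mod_def using assms(1) by (blast intro: divides_mult)
qed

lemma is_square_mod_prod:
  fixes f :: "'b \<Rightarrow> 'a::euclidean_ring_gcd"
  assumes "\<And>i j. i \<in> I \<Longrightarrow> j \<in> I \<Longrightarrow> i \<noteq> j \<Longrightarrow> coprime (f i) (f j)"
    and "\<And>i. i \<in> I \<Longrightarrow> is_square_mod (f i) a"
  shows "is_square_mod (\<Prod>i\<in>I. f i) a"
  using assms
proof (induction I rule: infinite_finite_induct)
  case (insert i I)
  have "coprime (f i) (\<Prod>j\<in>I. f j)"
    by (rule prod_coprime_right) (use insert in blast)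
  with insert show ?case
    by (simp add: is_square_mod_mult)
qed (simp_all add: is_square_mod_unit)

lemma is_square_mod_power_Suc:
  fixes q :: "'a::euclidean_ring_gcd"
  assumes "coprime q (2 * a)" "is_square_mod (q ^ Suc n) a"
  shows "is_square_mod (q ^ Suc (Suc n)) a"
proof -
  obtain t c where c: "a - t ^ 2 = q ^ Suc n * c"
    using assms(2) unfolding is_square_mod_def by (meson dvdE)
  have "coprime (2 * t) q"
  proof (rule coprimeI)
    fix d assume d: "d dvd 2 * t" "d dvd q"
    have "2 * a = t * (2 * t) + q * (2 * q ^ n * c)"
      using c by (simp add: algebra_simps power2_eq_square)
    with d have "d dvd 2 * a"
      by (metis dvd_add dvd_mult dvd_mult2)
    with d(2) assms(1) show "is_unit d"
      by (blast intro: coprime_common_divisor)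
  qed
  then obtain u v where uv: "u * (2 * t) + v * q = 1"
    by (rule coprime_bezout)
  \<comment> \<open>Newton step: \<open>c * u\<close> is \<open>c / (2 * t)\<close> modulo \<open>q\<close>.\<close>
  have "a - (t + c * u * q ^ Suc n) ^ 2 = q ^ Suc n * c * (u * (2 * t) + v * q)
      - c * u * (2 * t) * q ^ Suc n - (c * u) ^ 2 * q ^ Suc n * q ^ Suc n"
    using c uv by (simp add: algebra_simps power2_eq_square)
  also have "\<dots> = q ^ Suc (Suc n) * (c * v - (c * u) ^ 2 * q ^ n)"
    by (simp add: algebra_simps power2_eq_square)
  finally show ?thesis
    unfolding is_square_mod_def by (metis dvd_triv_left)
qed

lemma is_square_mod_power:
  fixes q :: "'a::euclidean_ring_gcd"
  assumes "coprime q (2 * a)" "is_square_mod q a"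
  shows "is_square_mod (q ^ n) a"
proof (cases n)
  case 0
  then show ?thesis by (simp add: is_square_mod_unit)
next
  case (Suc m)
  have "is_square_mod (q ^ Suc k) a" for k
  proof (induction k)
    case 0
    from assms(2) show ?case by simp
  next
    case (Suc k)
    from assms(1) this show ?case by (rule is_square_mod_power_Suc)
  qed
  with Suc show ?thesis by blast
qed

lemma is_square_mod_of_prime_factors:
  fixes x :: "'a::{euclidean_ring_gcd,factorial_semiring_multiplicative}"
  assumes "x \<noteq> 0" "coprime x (2 * a)"
    and "\<And>p. p \<in> prime_factors x \<Longrightarrow> is_square_mod p a"
  shows "is_square_mod x a"
proof -
  have "is_square_mod (\<Prod>p\<in>prime_factors x. p ^ multiplicity p x) a"
  proof (rule is_square_mod_prod)
    fix p q assume "p \<in> prime_factors x" "q \<in> prime_factors x" "p \<noteq> q"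
    then show "coprime (p ^ multiplicity p x) (q ^ multiplicity q x)"
      by (simp add: in_prime_factors_imp_prime primes_coprime)
  next
    fix p assume p: "p \<in> prime_factors x"
    then have "coprime p (2 * a)"
      using assms(2) by (meson coprime_divisors dvd_refl in_prime_factors_iff)
    with p assms(3) show "is_square_mod (p ^ multiplicity p x) a"
      by (simp add: is_square_mod_power)
  qed
  then show ?thesis
    using prod_prime_factors [OF assms(1)] by (simp add: is_square_mod_dvd [of x "normalize x"])
qed

lemma map_poly_of_real_add [simp]:
  "map_poly complex_of_real (p + q) = map_poly complex_of_real p + map_poly complex_of_real q"
  by (simp add: poly_eq_iff coeff_map_poly)

lemma map_poly_of_real_diff [simp]:
  "map_poly complex_of_real (p - q) = map_poly complex_of_real p - map_poly complex_of_real q"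
  by (simp add: poly_eq_iff coeff_map_poly)

lemma map_poly_of_real_mult [simp]:
  "map_poly complex_of_real (p * q) = map_poly complex_of_real p * map_poly complex_of_real q"
  by (simp add: poly_eq_iff coeff_mult coeff_map_poly)

lemma map_poly_of_real_power [simp]:
  "map_poly complex_of_real (p ^ n) = map_poly complex_of_real p ^ n"
  by (induction n) simp_all

lemma poly_map_poly_of_real:
  "poly (map_poly complex_of_real p) (of_real x) = of_real (poly p x)"
  by (induction p) (simp_all add: map_poly_pCons)

lemma prime_dvd_of_common_complex_root:
  fixes q f :: "real poly"
  assumes "prime q" "poly (map_poly complex_of_real q) z = 0" "poly (map_poly complex_of_real f) z = 0"
  shows "q dvd f"
proof (rule ccontr)
  assume "\<not> q dvd f"
  with assms(1) have "coprime q f"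
    by (rule prime_imp_coprime)
  then obtain u v where "u * q + v * f = 1"
    by (rule coprime_bezout)
  then have "poly (map_poly complex_of_real (u * q + v * f)) z = 1"
    by simp
  with assms(2,3) show False
    by simp
qed

lemma real_poly_through_nonreal_point:
  assumes "Im z \<noteq> 0"
  obtains t :: "real poly" where "poly (map_poly complex_of_real t) z = w"
proof
  let ?d = "Im w / Im z"
  show "poly (map_poly complex_of_real [:Re w - ?d * Re z, ?d:]) z = w"
    using assms by (simp add: map_poly_pCons complex_eq_iff field_simps)
qed

lemma is_square_mod_prime_factor:
  fixes q g a :: "real poly"
  assumes "prime q" "q dvd g" "\<forall>x. poly g x = 0 \<longrightarrow> poly a x > 0"
  shows "is_square_mod q a"
proof -
  let ?C = "map_poly complex_of_real"
  have "degree (?C q) > 0"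
    using assms(1) by (metis degree_map_poly is_unit_iff_degree not_prime_0 not_prime_unit gr0I of_real_eq_0_iff)
  then obtain z where z: "poly (?C q) z = 0"
    using fundamental_theorem_of_algebra constant_degree by (metis not_gr0)
  obtain t where t: "poly (?C t) z ^ 2 = poly (?C a) z"
  proof (cases "Im z = 0")
    case True
    then have zr: "z = of_real (Re z)"
      by (simp add: complex_eq_iff)
    from assms(2) z have "poly (?C g) z = 0"
      by (auto simp: dvd_def)
    then have "poly g (Re z) = 0"
      by (subst (asm) zr) (simp add: poly_map_poly_of_real)
    then have "poly a (Re z) > 0"
      using assms(3) by blast
    then have "poly (?C [:sqrt (poly a (Re z)):]) z ^ 2 = poly (?C a) z"
      by (subst (1 2) zr) (simp add: poly_map_poly_of_real flip: of_real_power)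
    then show ?thesis by (rule that)
  next
    case False
    then obtain t where "poly (?C t) z = csqrt (poly (?C a) z)"
      by (rule real_poly_through_nonreal_point)
    then show ?thesis
      by (intro that [of t]) simp
  qed
  have "poly (?C (a - t ^ 2)) z = 0"
    using t by simp
  then show ?thesis
    unfolding is_square_mod_def using prime_dvd_of_common_complex_root [OF assms(1) z] by blast
qed

lemma is_square_mod_if_positive_at_roots:
  fixes g a :: "real poly"
  assumes "g \<noteq> 0" "coprime g a" "\<forall>x. poly g x = 0 \<longrightarrow> poly a x > 0"
  shows "is_square_mod g a"
proof (rule is_square_mod_of_prime_factors)
  have "coprime g 2"
    by (simp add: is_unit_iff_degree is_unit_right_imp_coprime)
  with assms(2) show "coprime g (2 * a)"
    by simp
  show "is_square_mod p a" if "p \<in> prime_factors g" for p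
    using that assms(3) by (auto simp: in_prime_factors_iff intro: is_square_mod_prime_factor)
qed (fact assms(1))

lemma is_square_mod_degree_le:
  fixes g a :: "'a::field poly"
  assumes "g \<noteq> 0" "is_square_mod g a"
  obtains t where "degree t \<le> degree g" "g dvd a - t ^ 2"
proof -
  obtain t where "g dvd a - t ^ 2"
    using assms(2) unfolding is_square_mod_def by blast
  then have "g dvd a - (t mod g) ^ 2"
    by (metis mod_eq_dvd_iff power_mod)
  moreover have "degree (t mod g) \<le> degree g"
    using degree_mod_less [OF assms(1), of t] by auto
  ultimately show ?thesis
    by (rule that [rotated])
qed

theorem proposition3p8:
  fixes g a :: "real poly" and m :: nat
  assumes "coprime g a"
    and "degree g = m"
    and "\<forall>x::real. poly g x = 0 \<longrightarrow> poly a x > 0"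
  shows "\<exists>t :: real poly. degree t \<le> m \<and> (\<exists>w :: real poly. a = t ^ 2 + w * g)"
proof (cases "g = 0")
  case True
  with assms(1) have "is_unit a"
    by simp
  then obtain c where c: "a = [:c:]"
    by (metis is_unit_iff_degree degree_eq_zeroE not_is_unit_0)
  with True assms(3) have "c > 0"
    by auto
  with c have "a = [:sqrt c:] ^ 2 + 0 * g"
    by (simp add: power2_eq_square)
  then show ?thesis
    by (metis degree_pCons_0 zero_le)
next
  case False
  from False assms(1,3) have "is_square_mod g a"
    by (rule is_square_mod_if_positive_at_roots)
  with False obtain t where "degree t \<le> degree g" "g dvd a - t ^ 2"
    by (rule is_square_mod_degree_le)
  moreover from this(2) obtain w where "a - t ^ 2 = g * w"
    by (rule dvdE)
  ultimately show ?thesis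
    using assms(2) by (metis diff_eq_eq add.commute mult.commute)
qed

end
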